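(* Let $P\subset\mathbb{R}^k$ be a centrally symmetric $k$-dimensional polytope whose vertex set is $\{\pm v_1,\ldots,\pm v_n\}$, these $2n$ vectors being pairwise distinct. Then $$\sum_{i=1}^n\frac{\vol N_P(v_i)}{\vol P}\geqslant k,$$ with equality if and only if $P$ is a simplicial polytope.
   Context: $N_P(v)$ (the star of a vertex $v$) is the union of the sets $\mathop{\rm co}(F\cup\{0\})$ over all facets $F$ of $P$ containing $v$ or containing $-v$. $\vol$ is $k$-dimensional volume. *)

theory Defs
  imports "HOL-Analysis.Analysis"
begin

definition star_of :: "'a::euclidean_space set \<Rightarrow> 'a \<Rightarrow> 'a set" where
  "star_of P v = \<Union>{convex hull (insert 0 F) | F. F facet_of P \<and> (v \<in> F \<or> - v \<in> F)}"

definition simplicial_polytope :: "'a::euclidean_space set \<Rightarrow> bool" where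
  "simplicial_polytope P \<longleftrightarrow> (\<forall>F. F facet_of P \<longrightarrow> (aff_dim P - 1) simplex F)"

end

theory Submission
  imports Defs
begin

text \<open>Since P is centrally symmetric, the origin is an interior point, so P is the union of the
  pyramids over its facets with apex 0, which overlap only in null sets. Both vol P and each
  vol N_P(v_i) are therefore sums of pyramid volumes, and the pyramid over a facet F is counted
  once for every pair \<plusminus>v_i meeting F. A facet is cut out by a hyperplane w \<bullet> x = 1, so it
  contains at most one vertex of each antipodal pair, and the count is just the number of
  vertices of F. That number is at least k, with equality exactly when F is a (k-1)-simplex.\<close>

definition pyramid :: "'a::real_vector set \<Rightarrow> 'a set" where
  "pyramid F = convex hull (insert 0 F)"

lemma star_of_eq_Union_pyramid:
  "star_of P v = \<Union> (pyramid ` {F. F facet_of P \<and> (v \<in> F \<or> - v \<in> F)})"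
  unfolding star_of_def pyramid_def by blast

lemma aff_dim_full_imp_interior_nonempty:
  fixes S :: "'a::euclidean_space set"
  assumes "convex S" "S \<noteq> {}" "aff_dim S = int DIM('a)"
  shows "interior S \<noteq> {}"
  using assms rel_interior_eq_empty rel_interior_interior aff_dim_eq_full by metis

lemma zero_in_interior_symmetric_convex:
  fixes P :: "'a::euclidean_space set"
  assumes "convex P" "interior P \<noteq> {}" "\<forall>x\<in>P. - x \<in> P"
  shows "0 \<in> interior P"
proof -
  obtain x where x: "x \<in> interior P" using assms(2) by blast
  have "uminus ` P = P" using assms(3) by force
  then have "- x \<in> interior P" using x interior_negations[of P] by (metis image_eqI)
  then have "(1/2) *\<^sub>R x + (1/2) *\<^sub>R (- x) \<in> interior P"
    using x convex_interior[OF assms(1)] by (intro convexD) auto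
  then show ?thesis by simp
qed

lemma facet_of_polyhedron_normalized:
  fixes P :: "'a::euclidean_space set"
  assumes "polyhedron P" "0 \<in> interior P" "F facet_of P"
  obtains w where "P \<subseteq> {x. w \<bullet> x \<le> 1}" "F = P \<inter> {x. w \<bullet> x = 1}"
proof -
  obtain a b where ab: "a \<noteq> 0" "P \<subseteq> {x. a \<bullet> x \<le> b}" "F = P \<inter> {x. a \<bullet> x = b}"
    using facet_of_polyhedron[OF assms(1,3)] by blast
  have "0 \<in> interior {x. a \<bullet> x \<le> b}" using assms(2) interior_mono[OF ab(2)] by blast
  then have "b > 0" using ab(1) by simp
  then have "P \<subseteq> {x. (a /\<^sub>R b) \<bullet> x \<le> 1}" "F = P \<inter> {x. (a /\<^sub>R b) \<bullet> x = 1}"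
    using ab by (auto simp: field_simps)
  then show thesis by (rule that)
qed

lemma pyramid_lmeasurable:
  fixes F :: "'a::euclidean_space set"
  shows "compact F \<Longrightarrow> pyramid F \<in> lmeasurable"
  unfolding pyramid_def by (intro lmeasurable_compact compact_convex_hull) simp

lemma measure_pyramid_pos:
  fixes F :: "'a::euclidean_space set"
  assumes "compact F" "aff_dim F = int DIM('a) - 1" "0 \<notin> affine hull F"
  shows "measure lebesgue (pyramid F) > 0"
proof -
  have "aff_dim (pyramid F) = int DIM('a)"
    using assms(2,3) by (simp add: pyramid_def aff_dim_convex_hull aff_dim_insert)
  then have "interior (pyramid F) \<noteq> {}"
    by (intro aff_dim_full_imp_interior_nonempty) (auto simp: pyramid_def hull_inc)
  then have "\<not> negligible (pyramid F)"
    by (simp add: negligible_convex_interior pyramid_def)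
  then show ?thesis
    using pyramid_lmeasurable[OF assms(1)] negligible_iff_measure0 measure_nonneg
    by (metis order_le_less)
qed

lemma measure_facet_pyramid_pos:
  fixes P :: "'a::euclidean_space set"
  assumes "polytope P" "aff_dim P = int DIM('a)" "0 \<in> interior P" "F facet_of P"
  shows "measure lebesgue (pyramid F) > 0"
proof (rule measure_pyramid_pos)
  show "compact F"
    using assms(1,4) facet_of_imp_face_of face_of_polytope_polytope polytope_imp_compact by blast
  show "aff_dim F = int DIM('a) - 1" using assms(2,4) by (simp add: facet_of_def)
  obtain w where "F = P \<inter> {x. w \<bullet> x = 1}"
    using facet_of_polyhedron_normalized[OF polytope_imp_polyhedron[OF assms(1)] assms(3,4)] by blast
  then have "affine hull F \<subseteq> {x. w \<bullet> x = 1}" by (intro hull_minimal) (auto simp: affine_hyperplane)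
  then show "0 \<notin> affine hull F" by auto
qed

text \<open>Each of the two pyramids lies on its own side of the hyperplane on which the two facet
  functionals agree.\<close>
lemma negligible_Int_facet_pyramids:
  fixes P :: "'a::euclidean_space set"
  assumes "polyhedron P" "0 \<in> interior P" "F facet_of P" "G facet_of P" "F \<noteq> G"
  shows "negligible (pyramid F \<inter> pyramid G)"
proof -
  obtain wF where wF: "P \<subseteq> {x. wF \<bullet> x \<le> 1}" "F = P \<inter> {x. wF \<bullet> x = 1}"
    using facet_of_polyhedron_normalized[OF assms(1,2,3)] by blast
  obtain wG where wG: "P \<subseteq> {x. wG \<bullet> x \<le> 1}" "G = P \<inter> {x. wG \<bullet> x = 1}"
    using facet_of_polyhedron_normalized[OF assms(1,2,4)] by blast
  have "pyramid F \<subseteq> {x. (wG - wF) \<bullet> x \<le> 0}"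
    unfolding pyramid_def using wF wG convex_halfspace_le[of "wG - wF" 0]
    by (intro hull_minimal) (auto simp: inner_diff_left)
  moreover have "pyramid G \<subseteq> {x. (wG - wF) \<bullet> x \<ge> 0}"
    unfolding pyramid_def using wF wG convex_halfspace_ge[of 0 "wG - wF"]
    by (intro hull_minimal) (auto simp: inner_diff_left)
  ultimately have "pyramid F \<inter> pyramid G \<subseteq> {x. (wG - wF) \<bullet> x = 0}"
    by (blast intro: order_antisym)
  moreover have "wG - wF \<noteq> 0" using wF wG assms(5) by auto
  ultimately show ?thesis using negligible_hyperplane negligible_subset by blast
qed

lemma polytope_eq_Union_facet_pyramids:
  fixes P :: "'a::euclidean_space set"
  assumes "polytope P" "0 \<in> rel_interior P" "P \<noteq> {0}"
  shows "P = \<Union> (pyramid ` {F. F facet_of P})"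
proof
  have "0 \<in> P" using assms(2) rel_interior_subset by blast
  have "pyramid F \<subseteq> P" if "F facet_of P" for F
    unfolding pyramid_def using \<open>0 \<in> P\<close> facet_of_imp_subset[OF that] polytope_imp_convex[OF assms(1)]
    by (intro hull_minimal) auto
  then show "\<Union> (pyramid ` {F. F facet_of P}) \<subseteq> P" by blast
  show "P \<subseteq> \<Union> (pyramid ` {F. F facet_of P})"
  proof
    fix y assume "y \<in> P"
    then obtain z where z: "z \<in> rel_frontier P" "y \<in> closed_segment 0 z"
      using segment_to_rel_frontier[OF polytope_imp_convex[OF assms(1)]
          polytope_imp_bounded[OF assms(1)] assms(2) \<open>y \<in> P\<close>] assms(3)
      by blast
    then obtain F where F: "F facet_of P" "z \<in> F"
      using rel_frontier_of_polyhedron[OF polytope_imp_polyhedron[OF assms(1)]] by auto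
    have "closed_segment 0 z \<subseteq> pyramid F"
      unfolding pyramid_def segment_convex_hull using F(2) by (intro hull_mono) auto
    then have "y \<in> pyramid F" using z(2) by blast
    then show "y \<in> \<Union> (pyramid ` {F. F facet_of P})" using F(1) by blast
  qed
qed

lemma measure_Union_facet_pyramids:
  fixes P :: "'a::euclidean_space set"
  assumes "polytope P" "0 \<in> interior P" "\<F> \<subseteq> {F. F facet_of P}"
  shows "measure lebesgue (\<Union> (pyramid ` \<F>)) = (\<Sum>F\<in>\<F>. measure lebesgue (pyramid F))"
proof (rule measure_negligible_finite_Union_image)
  show "finite \<F>" using finite_polytope_facets[OF assms(1)] assms(3) finite_subset by blast
  show "pyramid F \<in> lmeasurable" if "F \<in> \<F>" for F
  proof (rule pyramid_lmeasurable)
    have "F facet_of P" using that assms(3) by blast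
    then show "compact F"
      using assms(1) facet_of_imp_face_of face_of_polytope_polytope polytope_imp_compact by blast
  qed
  show "pairwise (\<lambda>F G. negligible (pyramid F \<inter> pyramid G)) \<F>"
    using assms(3) negligible_Int_facet_pyramids[OF polytope_imp_polyhedron[OF assms(1)] assms(2)]
    unfolding pairwise_def by blast
qed

lemma measure_polytope_eq_sum_facet_pyramids:
  fixes P :: "'a::euclidean_space set"
  assumes "polytope P" "0 \<in> interior P" "P \<noteq> {0}"
  shows "measure lebesgue P = (\<Sum>F | F facet_of P. measure lebesgue (pyramid F))"
proof -
  have "P = \<Union> (pyramid ` {F. F facet_of P})"
    using polytope_eq_Union_facet_pyramids[OF assms(1) _ assms(3)] assms(2)
      interior_subset_rel_interior
    by blast
  then have "measure lebesgue P = measure lebesgue (\<Union> (pyramid ` {F. F facet_of P}))"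
    by (rule arg_cong)
  also have "\<dots> = (\<Sum>F | F facet_of P. measure lebesgue (pyramid F))"
    by (rule measure_Union_facet_pyramids[OF assms(1,2)]) simp
  finally show ?thesis .
qed

lemma sum_measure_star_of:
  fixes P :: "'a::euclidean_space set" and v :: "'i \<Rightarrow> 'a"
  assumes "polytope P" "0 \<in> interior P" "finite I"
  shows "(\<Sum>i\<in>I. measure lebesgue (star_of P (v i)))
    = (\<Sum>F | F facet_of P. real (card {i\<in>I. v i \<in> F \<or> - v i \<in> F}) * measure lebesgue (pyramid F))"
proof -
  have star: "measure lebesgue (star_of P (v i))
      = (\<Sum>F | F facet_of P \<and> (v i \<in> F \<or> - v i \<in> F). measure lebesgue (pyramid F))" for i
    unfolding star_of_eq_Union_pyramid by (rule measure_Union_facet_pyramids[OF assms(1,2)]) auto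
  have "(\<Sum>i\<in>I. measure lebesgue (star_of P (v i)))
      = (\<Sum>i\<in>I. \<Sum>F\<in>{F\<in>{F. F facet_of P}. v i \<in> F \<or> - v i \<in> F}. measure lebesgue (pyramid F))"
    by (simp add: star)
  also have "\<dots> = (\<Sum>F | F facet_of P. \<Sum>i\<in>{i\<in>I. v i \<in> F \<or> - v i \<in> F}. measure lebesgue (pyramid F))"
    by (rule sum.swap_restrict[OF assms(3) finite_polytope_facets[OF assms(1)]])
  also have "\<dots> = (\<Sum>F | F facet_of P.
      real (card {i\<in>I. v i \<in> F \<or> - v i \<in> F}) * measure lebesgue (pyramid F))"
    by simp
  finally show ?thesis .
qed

lemma polytope_card_extreme_points:
  fixes S :: "'a::euclidean_space set"
  assumes "polytope S"
  shows "aff_dim S + 1 \<le> int (card {x. x extreme_point_of S})"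
    and "int (card {x. x extreme_point_of S}) = aff_dim S + 1 \<longleftrightarrow> aff_dim S simplex S"
proof -
  define E where "E = {x. x extreme_point_of S}"
  have fin: "finite E"
    unfolding E_def using assms finite_polyhedron_extreme_points polytope_imp_polyhedron by blast
  have S: "S = convex hull E"
    unfolding E_def using assms Krein_Milman_Minkowski polytope_imp_compact polytope_imp_convex
    by blast
  then have adE: "aff_dim E = aff_dim S" by (simp add: aff_dim_convex_hull)
  show "aff_dim S + 1 \<le> int (card E)" using aff_dim_le_card[OF fin] adE by linarith
  show "int (card E) = aff_dim S + 1 \<longleftrightarrow> aff_dim S simplex S"
  proof
    assume "int (card E) = aff_dim S + 1"
    then have "\<not> affine_dependent E" unfolding affine_independent_iff_card using fin adE by simp
    then show "aff_dim S simplex S"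
      using S \<open>int (card E) = aff_dim S + 1\<close> simplex_convex_hull by metis
  next
    assume "aff_dim S simplex S"
    then obtain C where C: "\<not> affine_dependent C" "int (card C) = aff_dim S + 1" "S = convex hull C"
      unfolding simplex_def by blast
    then have "E = C" unfolding E_def using extreme_point_of_convex_hull_affine_independent by auto
    then show "int (card E) = aff_dim S + 1" using C(2) by simp
  qed
qed

lemma facet_card_extreme_points:
  fixes P :: "'a::euclidean_space set"
  assumes "polytope P" "F facet_of P"
  shows "aff_dim P \<le> int (card {x. x extreme_point_of F})"
    and "int (card {x. x extreme_point_of F}) = aff_dim P \<longleftrightarrow> (aff_dim P - 1) simplex F"
proof -
  have "polytope F" using assms face_of_polytope_polytope facet_of_imp_face_of by blast
  moreover have "aff_dim F = aff_dim P - 1" using assms(2) by (simp add: facet_of_def)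
  ultimately show "aff_dim P \<le> int (card {x. x extreme_point_of F})"
    and "int (card {x. x extreme_point_of F}) = aff_dim P \<longleftrightarrow> (aff_dim P - 1) simplex F"
    using polytope_card_extreme_points[of F] by auto
qed

lemma card_antipodal_indices:
  fixes v :: "'i \<Rightarrow> 'a::ab_group_add"
  assumes "inj_on v I" "\<forall>i\<in>I. \<forall>j\<in>I. v i \<noteq> - v j" "\<forall>x\<in>F. - x \<notin> F"
  shows "card {i\<in>I. v i \<in> F \<or> - v i \<in> F} = card (F \<inter> (v ` I \<union> (\<lambda>i. - v i) ` I))"
proof (rule bij_betw_same_card)
  define f where "f i = (if v i \<in> F then v i else - v i)" for i
  have "inj_on f {i\<in>I. v i \<in> F \<or> - v i \<in> F}"
  proof (rule inj_onI)
    fix i j assume i: "i \<in> {i\<in>I. v i \<in> F \<or> - v i \<in> F}" and j: "j \<in> {i\<in>I. v i \<in> F \<or> - v i \<in> F}"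
      and "f i = f j"
    moreover have "v i \<noteq> - v j" "v j \<noteq> - v i" using assms(2) i j by auto
    ultimately have "v i = v j" unfolding f_def by (auto simp: minus_equation_iff split: if_splits)
    then show "i = j" using assms(1) i j by (auto dest: inj_onD)
  qed
  moreover have "f ` {i\<in>I. v i \<in> F \<or> - v i \<in> F} = F \<inter> (v ` I \<union> (\<lambda>i. - v i) ` I)"
    using assms(3) unfolding f_def by force
  ultimately show "bij_betw f {i\<in>I. v i \<in> F \<or> - v i \<in> F} (F \<inter> (v ` I \<union> (\<lambda>i. - v i) ` I))"
    by (simp add: bij_betw_def)
qed

lemma card_facet_vertex_pairs:
  fixes P :: "'a::euclidean_space set"
  assumes "polytope P" "0 \<in> interior P" "F facet_of P"
    and "{x. x extreme_point_of P} = v ` I \<union> (\<lambda>i. - v i) ` I"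
    and "inj_on v I" "\<forall>i\<in>I. \<forall>j\<in>I. v i \<noteq> - v j"
  shows "card {i\<in>I. v i \<in> F \<or> - v i \<in> F} = card {x. x extreme_point_of F}"
proof -
  obtain w where w: "F = P \<inter> {x. w \<bullet> x = 1}"
    using facet_of_polyhedron_normalized[OF polytope_imp_polyhedron[OF assms(1)] assms(2,3)] by blast
  then have "\<forall>x\<in>F. - x \<notin> F" by auto
  moreover have "{x. x extreme_point_of F} = F \<inter> {x. x extreme_point_of P}"
    using extreme_point_of_face[OF facet_of_imp_face_of[OF assms(3)]] by auto
  ultimately show ?thesis using card_antipodal_indices[OF assms(5,6)] assms(4) by simp
qed

lemma weighted_mean_ge_iff:
  fixes c m :: "'i \<Rightarrow> real"
  assumes "finite A" "A \<noteq> {}" "\<forall>a\<in>A. 0 < m a" "\<forall>a\<in>A. k \<le> c a"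
  shows "k \<le> (\<Sum>a\<in>A. c a * m a) / (\<Sum>a\<in>A. m a)"
    and "(\<Sum>a\<in>A. c a * m a) / (\<Sum>a\<in>A. m a) = k \<longleftrightarrow> (\<forall>a\<in>A. c a = k)"
proof -
  have M: "(\<Sum>a\<in>A. m a) > 0" using assms(1-3) by (intro sum_pos) auto
  have D: "(\<Sum>a\<in>A. c a * m a) - k * (\<Sum>a\<in>A. m a) = (\<Sum>a\<in>A. (c a - k) * m a)"
    by (simp add: sum_distrib_left sum_subtractf left_diff_distrib)
  have nonneg: "0 \<le> (c a - k) * m a" if "a \<in> A" for a
    using assms(3,4) that by (simp add: less_imp_le)
  show "k \<le> (\<Sum>a\<in>A. c a * m a) / (\<Sum>a\<in>A. m a)"
    using D M sum_nonneg[of A "\<lambda>a. (c a - k) * m a", OF nonneg] by (simp add: le_divide_eq)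
  have "(\<Sum>a\<in>A. c a * m a) / (\<Sum>a\<in>A. m a) = k
      \<longleftrightarrow> (\<Sum>a\<in>A. c a * m a) = k * (\<Sum>a\<in>A. m a)"
    using M by (simp add: divide_eq_eq)
  also have "\<dots> \<longleftrightarrow> (\<Sum>a\<in>A. (c a - k) * m a) = 0" unfolding D[symmetric] by simp
  also have "\<dots> \<longleftrightarrow> (\<forall>a\<in>A. (c a - k) * m a = 0)" by (rule sum_nonneg_eq_0_iff[OF assms(1) nonneg])
  also have "\<dots> \<longleftrightarrow> (\<forall>a\<in>A. c a = k)" using assms(3) by force
  finally show "(\<Sum>a\<in>A. c a * m a) / (\<Sum>a\<in>A. m a) = k \<longleftrightarrow> (\<forall>a\<in>A. c a = k)" .
qed

theorem lemma11:
  fixes P :: "'a::euclidean_space set" and v :: "nat \<Rightarrow> 'a" and n :: nat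
  assumes "polytope P"
    and "aff_dim P = int DIM('a)"
    and "\<forall>x\<in>P. - x \<in> P"
    and "{x. x extreme_point_of P} = v ` {1..n} \<union> (\<lambda>i. - v i) ` {1..n}"
    and "inj_on v {1..n}"
    and "\<forall>i\<in>{1..n}. \<forall>j\<in>{1..n}. v i \<noteq> - v j"
  shows "(\<Sum>i=1..n. measure lebesgue (star_of P (v i)) / measure lebesgue P) \<ge> real DIM('a)
     \<and> ((\<Sum>i=1..n. measure lebesgue (star_of P (v i)) / measure lebesgue P) = real DIM('a)
          \<longleftrightarrow> simplicial_polytope P)"
proof -
  define Fs where "Fs = {F. F facet_of P}"
  define vol :: "'a set \<Rightarrow> real" where "vol F = measure lebesgue (pyramid F)" for F
  define c :: "'a set \<Rightarrow> nat" where "c F = card {i\<in>{1..n}. v i \<in> F \<or> - v i \<in> F}" for F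
  have "P \<noteq> {}" "P \<noteq> {0}" using assms(2) by auto
  then have int0: "0 \<in> interior P"
    using assms(1-3) polytope_imp_convex
    by (metis zero_in_interior_symmetric_convex aff_dim_full_imp_interior_nonempty)
  have ratio: "(\<Sum>i=1..n. measure lebesgue (star_of P (v i)) / measure lebesgue P)
      = (\<Sum>F\<in>Fs. real (c F) * vol F) / (\<Sum>F\<in>Fs. vol F)"
    unfolding sum_divide_distrib[symmetric] sum_measure_star_of[OF assms(1) int0 finite_atLeastAtMost]
      measure_polytope_eq_sum_facet_pyramids[OF assms(1) int0 \<open>P \<noteq> {0}\<close>] Fs_def vol_def c_def ..
  have "finite Fs" "Fs \<noteq> {}"
    using finite_polytope_facets[OF assms(1)] polytope_facet_exists[OF assms(1)] assms(2)
    unfolding Fs_def by auto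
  have c: "DIM('a) \<le> c F" "c F = DIM('a) \<longleftrightarrow> (aff_dim P - 1) simplex F" if "F \<in> Fs" for F
    using that facet_card_extreme_points[OF assms(1)] assms(2)
      card_facet_vertex_pairs[OF assms(1) int0 _ assms(4-6)]
    unfolding Fs_def c_def by auto
  have simplicial: "(\<forall>F\<in>Fs. real (c F) = real DIM('a)) \<longleftrightarrow> simplicial_polytope P"
    using c(2) unfolding simplicial_polytope_def Fs_def by auto
  have "\<forall>F\<in>Fs. 0 < vol F"
    using measure_facet_pyramid_pos[OF assms(1,2) int0] unfolding Fs_def vol_def by blast
  from weighted_mean_ge_iff[OF \<open>finite Fs\<close> \<open>Fs \<noteq> {}\<close> this, of "real DIM('a)" "\<lambda>F. real (c F)"]
  show ?thesis unfolding ratio simplicial using c(1) by simp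
qed

end
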